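(* Consider the threshold delay system (the "TDE model") described in the context and let $N_{T1}=f^{-1}(\lambda/\mu)$. Let $(\phi_1,\phi_2,\phi_3)^T\in D_{N_T}$ and let $(N,P,Z)^T:[0,\infty)\to\mathbb{R}^3$ be the solution of the corresponding initial value problem. If $N_T>N_{T1}$, then for any constant $\beta>N_T-N_{T1}$ there exists $t_1\ge t_0$ such that $P(t)<\beta$ for all $t\ge t_1$.
   Context: Standing assumptions: constants $\mu>\lambda>0$, $g>0$, $\gamma\in(0,1]$, $\delta>0$ with $\gamma g>\delta$, $\delta_0\ge 0$, $m>0$, $N_T>0$. The functions $f,h:[0,\infty)\to[0,\infty)$ are $C^1$ with $f(0)=0$, $f'>0$, $\lim_{N\to\infty}f(N)=1$ and $h(0)=0$, $h'>0$, $\lim_{P\to\infty}h(P)=1$. The function $R:[0,\infty)\to[0,\infty)$ is $C^1$ with $R\ge0$, $R'\ge0$, $R'(0)>0$ if $R(0)=0$, $\lim_{P\to\infty}R(P)=R_\infty<\infty$. For a function $P$ and $s\in[0,m]$, the delay $\tau(s,P_t)\ge0$ is defined implicitly by $\int_{-\tau(s,P_t)}^0 R(P(t+u))\,du=s$. TDE model, for $t\ge t_0$: $$N'(t)=-\mu P f(N)+\lambda P+\delta Z+(1-\gamma)gZh(P)+\delta_0(N_T-N-P-Z),$$ $$P'(t)=\mu P f(N)-\lambda P-gZh(P),$$ $$Z'(t)=R(P(t))e^{-\delta_0\tau(m,P_t)}\frac{\gamma g Z(t-\tau(m,P_t))h(P(t-\tau(m,P_t)))}{R(P(t-\tau(m,P_t)))}-\delta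 Z(t),$$ with initial conditions $N(t_0+t)=\phi_1(t)$, $P(t_0+t)=\phi_2(t)$, $Z(t_0+t)=\phi_3(t)$ for $t\in[-t_0,0]$. $D_{N_T}$ is the set of triples $(\phi_1,\phi_2,\phi_3)$ of continuous functions on $[-t_0,0]$ (some $t_0>0$) with $\phi_i>0$, $\int_{-t_0}^0R(\phi_2(u))\,du=m$, and $$N_T=\phi_1(0)+\phi_2(0)+\phi_3(0)+\int_0^m e^{-\delta_0\tau(s,\phi_2)}\frac{\gamma g\,\phi_3(-\tau(s,\phi_2))h(\phi_2(-\tau(s,\phi_2)))}{R(\phi_2(-\tau(s,\phi_2)))}\,ds,$$ where $\tau(s,\phi_2)\in[0,t_0]$ solves $\int_{-\tau(s,\phi_2)}^0R(\phi_2(u))\,du=s$. *)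

theory Defs
  imports "HOL-Analysis.Analysis"
begin

definition C1_nonneg :: "(real \<Rightarrow> real) \<Rightarrow> (real \<Rightarrow> real) \<Rightarrow> bool" where
  "C1_nonneg f f' \<longleftrightarrow>
     (\<forall>x\<ge>0. (f has_real_derivative f' x) (at x within {0..})) \<and> continuous_on {0..} f'"

text \<open>Implicitly defined delay: the \<tau> \<ge> 0 with t - \<tau> \<ge> lo and
  \<integral>_{t-\<tau>}^{t} R(p u) du = s, i.e. \<integral>_{-\<tau>}^0 R(p(t+u)) du = s.
  lo is the left end of the interval where p is defined.\<close>
definition delay :: "(real \<Rightarrow> real) \<Rightarrow> (real \<Rightarrow> real) \<Rightarrow> real \<Rightarrow> real \<Rightarrow> real \<Rightarrow> real" where
  "delay R p lo t s = (THE \<tau>. 0 \<le> \<tau> \<and> lo \<le> t - \<tau> \<and> integral {t - \<tau>..t} (\<lambda>u. R (p u)) = s)"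

definition D_NT ::
  "(real \<Rightarrow> real) \<Rightarrow> (real \<Rightarrow> real) \<Rightarrow> real \<Rightarrow> real \<Rightarrow> real \<Rightarrow> real \<Rightarrow> real \<Rightarrow> real
   \<Rightarrow> (real \<Rightarrow> real) \<Rightarrow> (real \<Rightarrow> real) \<Rightarrow> (real \<Rightarrow> real) \<Rightarrow> bool" where
  "D_NT R h \<gamma> g \<delta>0 m NT t0 \<phi>1 \<phi>2 \<phi>3 \<longleftrightarrow>
     t0 > 0 \<and>
     continuous_on {-t0..0} \<phi>1 \<and> continuous_on {-t0..0} \<phi>2 \<and> continuous_on {-t0..0} \<phi>3 \<and>
     (\<forall>u\<in>{-t0..0}. \<phi>1 u > 0 \<and> \<phi>2 u > 0 \<and> \<phi>3 u > 0) \<and>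
     integral {-t0..0} (\<lambda>u. R (\<phi>2 u)) = m \<and>
     NT = \<phi>1 0 + \<phi>2 0 + \<phi>3 0 +
       integral {0..m} (\<lambda>s. let \<tau> = delay R \<phi>2 (-t0) 0 s in
          exp (-\<delta>0 * \<tau>) * \<gamma> * g * \<phi>3 (-\<tau>) * h (\<phi>2 (-\<tau>)) / R (\<phi>2 (-\<tau>)))"

definition TDE_solution ::
  "real \<Rightarrow> real \<Rightarrow> real \<Rightarrow> real \<Rightarrow> real \<Rightarrow> real \<Rightarrow> real \<Rightarrow> real \<Rightarrow> real \<Rightarrow>
   (real \<Rightarrow> real) \<Rightarrow> (real \<Rightarrow> real) \<Rightarrow> (real \<Rightarrow> real) \<Rightarrow>
   (real \<Rightarrow> real) \<Rightarrow> (real \<Rightarrow> real) \<Rightarrow> (real \<Rightarrow> real) \<Rightarrow>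
   (real \<Rightarrow> real) \<Rightarrow> (real \<Rightarrow> real) \<Rightarrow> (real \<Rightarrow> real) \<Rightarrow> bool" where
  "TDE_solution \<mu> lam g \<gamma> \<delta> \<delta>0 m NT t0 f h R \<phi>1 \<phi>2 \<phi>3 N P Z \<longleftrightarrow>
     continuous_on {0..} N \<and> continuous_on {0..} P \<and> continuous_on {0..} Z \<and>
     (\<forall>t\<in>{-t0..0}. N (t0 + t) = \<phi>1 t \<and> P (t0 + t) = \<phi>2 t \<and> Z (t0 + t) = \<phi>3 t) \<and>
     (\<forall>t\<ge>t0.
        (N has_real_derivative
           (- \<mu> * P t * f (N t) + lam * P t + \<delta> * Z t + (1 - \<gamma>) * g * Z t * h (P t)
            + \<delta>0 * (NT - N t - P t - Z t))) (at t within {t0..}) \<and>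
        (P has_real_derivative
           (\<mu> * P t * f (N t) - lam * P t - g * Z t * h (P t))) (at t within {t0..}) \<and>
        (Z has_real_derivative
           (let \<tau> = delay R P 0 t m in
              R (P t) * exp (-\<delta>0 * \<tau>) * \<gamma> * g * Z (t - \<tau>) * h (P (t - \<tau>)) / R (P (t - \<tau>))
              - \<delta> * Z t)) (at t within {t0..}))"

end

theory Submission
  imports Defs
begin

text \<open>
  Let J(t) be the biomass that has entered the delayed (juvenile) stage during the last
  maturation period and survived, J(t) = integral over [t - tau(m,P_t), t] of
  exp(-delta0 (t - u)) gamma g Z(u) h(P(u)) du.  Measuring time by the maturation clock
  integral_0^t R(P), the quantity exp(delta0 t) (N + P + Z + J - N_T) has derivative zero,
  and it vanishes at t0 because the change of variables along the clock turns J(t0) into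
  the integral in the definition of D_{N_T}; so N + P + Z + J = N_T.  A first-exit argument
  with exponential lower bounds keeps N, P, Z positive, and J >= 0, hence N + P < N_T.
  Whenever P >= beta we therefore have N < N_T - beta < N_T1, so f(N) < f(N_T1) = lambda/mu and
  P' <= -(lambda - mu f(N_T - beta)) beta < 0: P drops below beta in finite time and can never
  climb back above it.
\<close>

section \<open>Calculus on the half-line\<close>

lemma C1_nonneg_continuous_on: "C1_nonneg f f' \<Longrightarrow> continuous_on {0..} f"
  unfolding C1_nonneg_def by (intro DERIV_continuous_on) auto

lemma C1_nonneg_DERIV:
  assumes "C1_nonneg f f'" "0 < x"
  shows "DERIV f x :> f' x"
proof -
  have "at x within {0..} = at x"
    using assms(2) by (intro at_within_interior) auto
  then show ?thesis
    using assms unfolding C1_nonneg_def by (metis less_imp_le)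
qed

lemma C1_nonneg_mono:
  assumes "C1_nonneg f f'" "\<forall>x\<ge>0. 0 \<le> f' x" "0 \<le> x" "x \<le> y"
  shows "f x \<le> f y"
proof (rule DERIV_nonneg_imp_increasing_open[OF assms(4)])
  show "continuous_on {x..y} f"
    using C1_nonneg_continuous_on[OF assms(1)] by (rule continuous_on_subset) (use assms in auto)
  show "\<exists>d. DERIV f t :> d \<and> 0 \<le> d" if "x < t" "t < y" for t
    using C1_nonneg_DERIV[OF assms(1), of t] assms that by auto
qed

lemma C1_nonneg_strict_mono:
  assumes "C1_nonneg f f'" "\<forall>x\<ge>0. 0 < f' x" "0 \<le> x" "x < y"
  shows "f x < f y"
proof (rule DERIV_pos_imp_increasing_open[OF assms(4)])
  show "continuous_on {x..y} f"
    using C1_nonneg_continuous_on[OF assms(1)] by (rule continuous_on_subset) (use assms in auto)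
  show "\<exists>d. DERIV f t :> d \<and> 0 < d" if "x < t" "t < y" for t
    using C1_nonneg_DERIV[OF assms(1), of t] assms that by auto
qed

lemma continuous_on_Icc_abs_bound:
  fixes x :: "real \<Rightarrow> real"
  assumes "continuous_on {a..b} x"
  obtains B where "0 < B" "\<And>t. t \<in> {a..b} \<Longrightarrow> \<bar>x t\<bar> \<le> B"
  using compact_imp_bounded[OF compact_continuous_image[OF assms compact_Icc]]
  unfolding bounded_pos by auto

lemma C1_nonneg_le_linear:
  assumes "C1_nonneg h h'" "h 0 = 0"
  obtains C where "\<And>x. x \<in> {0..B} \<Longrightarrow> h x \<le> C * x"
proof -
  have "continuous_on {0..B} h'"
    using assms(1) unfolding C1_nonneg_def by (auto intro: continuous_on_subset)
  then obtain C where C: "\<And>t. t \<in> {0..B} \<Longrightarrow> \<bar>h' t\<bar> \<le> C"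
    using continuous_on_Icc_abs_bound by metis
  have "h x \<le> C * x" if x: "x \<in> {0..B}" for x
  proof -
    have "h x - C * x \<le> h 0 - C * 0"
    proof (rule DERIV_nonpos_imp_decreasing_open[of 0 x "\<lambda>y. h y - C * y"])
      show "continuous_on {0..x} (\<lambda>y. h y - C * y)"
        using C1_nonneg_continuous_on[OF assms(1)] by (intro continuous_intros) (auto intro: continuous_on_subset)
      show "\<exists>d. DERIV (\<lambda>y. h y - C * y) t :> d \<and> d \<le> 0" if "0 < t" "t < x" for t
        using C1_nonneg_DERIV[OF assms(1) \<open>0 < t\<close>] C[of t] that x
        by (auto intro!: derivative_eq_intros)
    qed (use x in auto)
    then show ?thesis using assms(2) by simp
  qed
  then show thesis by (rule that)
qed

lemma C1_nonneg_the_preimage: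
  assumes "C1_nonneg f f'" "\<forall>x\<ge>0. 0 < f' x" "f 0 = 0" "(f \<longlongrightarrow> 1) at_top" "0 \<le> y" "y < 1"
  shows "0 \<le> (THE x. 0 \<le> x \<and> f x = y)" "f (THE x. 0 \<le> x \<and> f x = y) = y"
proof -
  obtain X where X: "\<forall>x\<ge>X. y < f x"
    using order_tendstoD(1)[OF assms(4,6)] unfolding eventually_at_top_linorder by blast
  have "continuous_on {0..max X 0} f"
    using C1_nonneg_continuous_on[OF assms(1)] by (rule continuous_on_subset) auto
  then obtain x where x: "0 \<le> x" "f x = y"
    using IVT'[of f 0 y "max X 0"] X assms(3,5) by (auto simp: less_imp_le)
  have "x' = x" if "0 \<le> x'" "f x' = y" for x'
    using C1_nonneg_strict_mono[OF assms(1,2), of x' x] C1_nonneg_strict_mono[OF assms(1,2), of x x'] x that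
    by (cases x' x rule: linorder_cases) auto
  with x have "\<exists>!x. 0 \<le> x \<and> f x = y" by blast
  from theI'[OF this] show "0 \<le> (THE x. 0 \<le> x \<and> f x = y)" "f (THE x. 0 \<le> x \<and> f x = y) = y"
    by auto
qed

lemma exp_lower_bound_DERIV:
  fixes x :: "real \<Rightarrow> real"
  assumes "a \<le> b" "continuous_on {a..b} x"
    and "\<And>t. a < t \<Longrightarrow> t < b \<Longrightarrow> \<exists>d. DERIV x t :> d \<and> - K * x t \<le> d"
  shows "x a * exp (- K * (b - a)) \<le> x b"
proof -
  have "exp (K * a) * x a \<le> exp (K * b) * x b"
  proof (rule DERIV_nonneg_imp_increasing_open[OF assms(1)])
    fix t assume "a < t" "t < b"
    then obtain d where d: "DERIV x t :> d" "- K * x t \<le> d"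
      using assms(3) by blast
    have "DERIV (\<lambda>t. exp (K * t) * x t) t :> exp (K * t) * (K * x t + d)"
      using d(1) by (auto intro!: derivative_eq_intros simp: algebra_simps)
    moreover have "0 \<le> exp (K * t) * (K * x t + d)"
      using d(2) by simp
    ultimately show "\<exists>y. DERIV (\<lambda>t. exp (K * t) * x t) t :> y \<and> 0 \<le> y"
      by blast
  qed (use assms(2) in \<open>intro continuous_intros\<close>)
  then have "exp (K * a) * x a * exp (- K * b) \<le> exp (K * b) * x b * exp (- K * b)"
    by (intro mult_right_mono) auto
  then show ?thesis
    by (simp add: algebra_simps exp_add[symmetric] exp_diff)
qed

lemma DERIV_le_imp_linear_decrease:
  fixes p :: "real \<Rightarrow> real"
  assumes "a \<le> b" "continuous_on {a..b} p"
    and "\<And>t. a < t \<Longrightarrow> t < b \<Longrightarrow> \<exists>d. DERIV p t :> d \<and> d \<le> - c"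
  shows "p b \<le> p a - c * (b - a)"
proof -
  have "(\<lambda>t. p t + c * t) b \<le> (\<lambda>t. p t + c * t) a"
  proof (rule DERIV_nonpos_imp_decreasing_open[OF assms(1)])
    show "\<exists>d. DERIV (\<lambda>t. p t + c * t) t :> d \<and> d \<le> 0" if "a < t" "t < b" for t
      using assms(3)[OF that] by (auto intro!: derivative_eq_intros)
  qed (use assms(2) in \<open>intro continuous_intros\<close>)
  then show ?thesis by (simp add: algebra_simps)
qed

lemma closed_first_point:
  fixes S :: "real set"
  assumes "closed S" "S \<subseteq> {a..}" "t \<in> S"
  obtains s where "s \<in> S" "s \<le> t" "\<And>x. x < s \<Longrightarrow> x \<notin> S"
proof
  have "bdd_below S"
    using assms(2) by (auto intro: bdd_belowI)
  then show "Inf S \<in> S" "Inf S \<le> t"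
    using closed_contains_Inf[OF _ _ assms(1)] cInf_lower assms(3) by auto
  show "x \<notin> S" if "x < Inf S" for x
    using that cInf_lower[OF _ \<open>bdd_below S\<close>, of x] by auto
qed

lemma stays_below_level:
  fixes p :: "real \<Rightarrow> real"
  assumes "t1 \<le> t2" "continuous_on {t1..t2} p" "p t1 < \<beta>"
    and decr: "\<And>t. t1 < t \<Longrightarrow> t \<le> t2 \<Longrightarrow> \<beta> \<le> p t \<Longrightarrow> \<exists>d<0. DERIV p t :> d"
  shows "p t2 < \<beta>"
proof (rule ccontr)
  assume "\<not> p t2 < \<beta>"
  let ?S = "{t \<in> {t1..t2}. \<beta> \<le> p t}"
  have "closed ?S"
    by (rule continuous_on_closed_Collect_le[OF continuous_on_const assms(2) closed_atLeastAtMost])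
  then obtain s where s: "s \<in> ?S" and before: "\<And>x. x < s \<Longrightarrow> x \<notin> ?S"
    by (rule closed_first_point[where a = t1 and t = t2]) (use assms \<open>\<not> p t2 < \<beta>\<close> in auto)
  have "t1 < s"
    using s assms(3) by (cases "s = t1") auto
  then obtain d where "d < 0" "DERIV p s :> d"
    using decr s by auto
  then obtain e where e: "0 < e" "\<And>h. 0 < h \<Longrightarrow> h < e \<Longrightarrow> p s < p (s - h)"
    using DERIV_neg_dec_left by blast
  define h where "h = min (e / 2) ((s - t1) / 2)"
  have "0 < h" "h < e"
    using e(1) \<open>t1 < s\<close> unfolding h_def by auto
  have "h \<le> (s - t1) / 2"
    unfolding h_def by (rule min.cobounded2)
  then have "p (s - h) < \<beta>"
    using before[of "s - h"] s \<open>0 < h\<close> \<open>h \<le> (s - t1) / 2\<close> by auto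
  moreover have "p s < p (s - h)"
    using e(2) \<open>0 < h\<close> \<open>h < e\<close> by blast
  ultimately show False
    using s by auto
qed

lemma integral_reflect_Icc:
  "integral {0..c} (\<lambda>s. F (c - s)) = integral {0..c::real} (F :: real \<Rightarrow> real)"
proof -
  have "integral {0..c} (\<lambda>s. F (c - s)) = integral {-c..0} (\<lambda>w. F (- w))"
    using integral_shift_Icc_real[of "-c" 0 "\<lambda>s. F (c - s)" c] by (simp add: o_def)
  then show ?thesis
    using Henstock_Kurzweil_Integration.integral_reflect_real[of c 0 F] by simp
qed

locale tde_model =
  fixes \<mu> lam g \<gamma> \<delta> \<delta>0 m NT t0 :: real
    and f f' h h' R R' \<phi>1 \<phi>2 \<phi>3 N P Z :: "real \<Rightarrow> real"
  assumes mu_gt_lam: "lam < \<mu>" and lam_pos: "0 < lam" and g_pos: "0 < g"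
    and gamma_pos: "0 < \<gamma>" and gamma_le_1: "\<gamma> \<le> 1" and delta_pos: "0 < \<delta>"
    and delta0_nonneg: "0 \<le> \<delta>0" and m_pos: "0 < m"
    and f_C1: "C1_nonneg f f'" and f_nonneg: "\<forall>x\<ge>0. 0 \<le> f x" and f_0: "f 0 = 0"
    and f'_pos: "\<forall>x\<ge>0. 0 < f' x" and f_tendsto: "(f \<longlongrightarrow> 1) at_top"
    and h_C1: "C1_nonneg h h'" and h_nonneg: "\<forall>x\<ge>0. 0 \<le> h x" and h_0: "h 0 = 0"
    and R_C1: "C1_nonneg R R'" and R_nonneg: "\<forall>x\<ge>0. 0 \<le> R x" and R'_nonneg: "\<forall>x\<ge>0. 0 \<le> R' x"
    and R'_0: "R 0 = 0 \<longrightarrow> 0 < R' 0"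
    and initial_data: "D_NT R h \<gamma> g \<delta>0 m NT t0 \<phi>1 \<phi>2 \<phi>3"
    and solution: "TDE_solution \<mu> lam g \<gamma> \<delta> \<delta>0 m NT t0 f h R \<phi>1 \<phi>2 \<phi>3 N P Z"
begin

lemma t0_pos: "0 < t0"
  using initial_data unfolding D_NT_def by blast

lemma initial_R_integral: "integral {-t0..0} (\<lambda>u. R (\<phi>2 u)) = m"
  using initial_data unfolding D_NT_def by blast

lemma NT_initial: "NT = \<phi>1 0 + \<phi>2 0 + \<phi>3 0 +
       integral {0..m} (\<lambda>s. let \<tau> = delay R \<phi>2 (-t0) 0 s in
          exp (-\<delta>0 * \<tau>) * \<gamma> * g * \<phi>3 (-\<tau>) * h (\<phi>2 (-\<tau>)) / R (\<phi>2 (-\<tau>)))"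
  using initial_data unfolding D_NT_def by blast

lemma initial_segment:
  assumes "u \<in> {0..t0}"
  shows "N u = \<phi>1 (u - t0)" "P u = \<phi>2 (u - t0)" "Z u = \<phi>3 (u - t0)"
proof -
  have "u - t0 \<in> {-t0..0}"
    using assms by auto
  with solution show "N u = \<phi>1 (u - t0)" "P u = \<phi>2 (u - t0)" "Z u = \<phi>3 (u - t0)"
    unfolding TDE_solution_def by (metis add.commute diff_add_cancel)+
qed

lemma initial_segment_pos:
  assumes "u \<in> {0..t0}"
  shows "0 < N u" "0 < P u" "0 < Z u"
proof -
  have "u - t0 \<in> {-t0..0}"
    using assms by auto
  with initial_data show "0 < N u" "0 < P u" "0 < Z u"
    unfolding D_NT_def initial_segment[OF assms] by blast+
qed

lemma NPZ_continuous_on: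
  assumes "0 \<le> a"
  shows "continuous_on {a..b} N" "continuous_on {a..b} P" "continuous_on {a..b} Z"
  using solution assms unfolding TDE_solution_def by (auto intro: continuous_on_subset)

lemma
  assumes "t0 < t"
  shows N_DERIV: "DERIV N t :> - \<mu> * P t * f (N t) + lam * P t + \<delta> * Z t
      + (1 - \<gamma>) * g * Z t * h (P t) + \<delta>0 * (NT - N t - P t - Z t)"
    and P_DERIV: "DERIV P t :> \<mu> * P t * f (N t) - lam * P t - g * Z t * h (P t)"
    and Z_DERIV: "DERIV Z t :> (let \<tau> = delay R P 0 t m in
      R (P t) * exp (-\<delta>0 * \<tau>) * \<gamma> * g * Z (t - \<tau>) * h (P (t - \<tau>)) / R (P (t - \<tau>))
      - \<delta> * Z t)"
proof -
  have at_t: "at t within {t0..} = at t"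
    using assms by (intro at_within_interior) auto
  have "\<forall>t\<ge>t0.
        (N has_real_derivative
           (- \<mu> * P t * f (N t) + lam * P t + \<delta> * Z t + (1 - \<gamma>) * g * Z t * h (P t)
            + \<delta>0 * (NT - N t - P t - Z t))) (at t within {t0..}) \<and>
        (P has_real_derivative
           (\<mu> * P t * f (N t) - lam * P t - g * Z t * h (P t))) (at t within {t0..}) \<and>
        (Z has_real_derivative
           (let \<tau> = delay R P 0 t m in
              R (P t) * exp (-\<delta>0 * \<tau>) * \<gamma> * g * Z (t - \<tau>) * h (P (t - \<tau>)) / R (P (t - \<tau>))
              - \<delta> * Z t)) (at t within {t0..})"
    using solution unfolding TDE_solution_def by blast
  from this[rule_format, of t, unfolded at_t] assms
  show "DERIV N t :> - \<mu> * P t * f (N t) + lam * P t + \<delta> * Z t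
      + (1 - \<gamma>) * g * Z t * h (P t) + \<delta>0 * (NT - N t - P t - Z t)"
    and "DERIV P t :> \<mu> * P t * f (N t) - lam * P t - g * Z t * h (P t)"
    and "DERIV Z t :> (let \<tau> = delay R P 0 t m in
      R (P t) * exp (-\<delta>0 * \<tau>) * \<gamma> * g * Z (t - \<tau>) * h (P (t - \<tau>)) / R (P (t - \<tau>))
      - \<delta> * Z t)"
    by simp_all
qed

lemma R_pos:
  assumes "0 < x"
  shows "0 < R x"
proof (cases "R 0 = 0")
  case False
  then show ?thesis
    using R_nonneg C1_nonneg_mono[OF R_C1 R'_nonneg, of 0 x] assms by force
next
  case True
  then have "(R has_real_derivative R' 0) (at 0 within {0..})" "0 < R' 0"
    using R_C1 R'_0 unfolding C1_nonneg_def by auto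
  then obtain d where d: "0 < d" "\<forall>e>0. 0 + e \<in> {0..} \<longrightarrow> e < d \<longrightarrow> R 0 < R (0 + e)"
    using has_real_derivative_pos_inc_right by blast
  define y where "y = min x (d / 2)"
  have "R 0 < R y"
    using d assms unfolding y_def by auto
  moreover have "R y \<le> R x"
    using C1_nonneg_mono[OF R_C1 R'_nonneg, of y x] assms d unfolding y_def by auto
  ultimately show ?thesis
    using True by simp
qed

subsection \<open>The maturation clock\<close>

definition clock :: "real \<Rightarrow> real" where
  "clock t = integral {0..t} (\<lambda>u. R (P u))"

definition clock_inv :: "real \<Rightarrow> real \<Rightarrow> real" where
  "clock_inv T y = (THE x. x \<in> {0..T} \<and> clock x = y)"

text \<open>Individuals maturing at time t were recruited at time entry_time T t, when the clock
  stood exactly m lower.\<close>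

definition entry_time :: "real \<Rightarrow> real \<Rightarrow> real" where
  "entry_time T t = clock_inv T (clock t - m)"

definition recruitment :: "real \<Rightarrow> real" where
  "recruitment u = \<gamma> * g * Z u * h (P u)"

definition weighted_recruitment :: "real \<Rightarrow> real" where
  "weighted_recruitment t = integral {0..t} (\<lambda>u. exp (\<delta>0 * u) * recruitment u)"

text \<open>Biomass in the delayed stage: recruited during the last maturation period and still
  alive at time t.\<close>

definition juvenile_mass :: "real \<Rightarrow> real" where
  "juvenile_mass t = integral {t - delay R P 0 t m..t} (\<lambda>u. exp (- \<delta>0 * (t - u)) * recruitment u)"

definition mass_excess :: "real \<Rightarrow> real \<Rightarrow> real" where
  "mass_excess T t = exp (\<delta>0 * t) * (N t + P t + Z t - NT)
     + (weighted_recruitment t - weighted_recruitment (entry_time T t))"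

text \<open>On a horizon T on which P stays positive the clock is strictly increasing, so the
  delay is well defined there.\<close>

context
  fixes T
  assumes T_ge: "t0 \<le> T" and P_pos_upto: "\<forall>u\<in>{0..T}. 0 < P u"
begin

lemma R_P_continuous_on: "continuous_on {0..T} (\<lambda>u. R (P u))"
proof (rule continuous_on_compose2[OF C1_nonneg_continuous_on[OF R_C1]])
  show "continuous_on {0..T} P"
    by (rule NPZ_continuous_on) simp
qed (use P_pos_upto in \<open>auto simp: less_imp_le\<close>)

lemma R_P_pos: "u \<in> {0..T} \<Longrightarrow> 0 < R (P u)"
  using P_pos_upto R_pos by blast

lemma clock_DERIV_within:
  "x \<in> {0..T} \<Longrightarrow> (clock has_real_derivative R (P x)) (at x within {0..T})"
  unfolding clock_def by (rule integral_has_real_derivative[OF R_P_continuous_on])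

lemma clock_DERIV: "x \<in> {0<..<T} \<Longrightarrow> DERIV clock x :> R (P x)"
  using clock_DERIV_within[of x] at_within_interior[of x "{0..T}"] by auto

lemma clock_continuous_on: "continuous_on {0..T} clock"
  using clock_DERIV_within by (rule DERIV_continuous_on)

lemma clock_0: "clock 0 = 0"
  unfolding clock_def by simp

lemma clock_diff:
  assumes "x \<le> y" "x \<in> {0..T}" "y \<in> {0..T}"
  shows "integral {x..y} (\<lambda>u. R (P u)) = clock y - clock x"
proof -
  have "(\<lambda>u. R (P u)) integrable_on {0..y}"
    using assms by (intro integrable_continuous_real continuous_on_subset[OF R_P_continuous_on]) auto
  from Henstock_Kurzweil_Integration.integral_combine[OF _ _ this, of x] assms
  have "clock x + integral {x..y} (\<lambda>u. R (P u)) = clock y"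
    unfolding clock_def by auto
  then show ?thesis
    by linarith
qed

lemma clock_strict_mono:
  assumes "x < y" "x \<in> {0..T}" "y \<in> {0..T}"
  shows "clock x < clock y"
proof (rule DERIV_pos_imp_increasing_open[OF assms(1)])
  show "continuous_on {x..y} clock"
    using assms by (intro continuous_on_subset[OF clock_continuous_on]) auto
  show "\<exists>d. DERIV clock t :> d \<and> 0 < d" if "x < t" "t < y" for t
    using clock_DERIV[of t] R_P_pos[of t] assms that by auto
qed

lemma clock_le_iff: "x \<in> {0..T} \<Longrightarrow> y \<in> {0..T} \<Longrightarrow> clock x \<le> clock y \<longleftrightarrow> x \<le> y"
  using clock_strict_mono[of x y] clock_strict_mono[of y x] by (cases x y rule: linorder_cases) auto

lemma clock_eq_iff: "x \<in> {0..T} \<Longrightarrow> y \<in> {0..T} \<Longrightarrow> clock x = clock y \<longleftrightarrow> x = y"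
  using clock_le_iff[of x y] clock_le_iff[of y x] by auto

lemma clock_t0: "clock t0 = m"
proof -
  have "clock t0 = integral {0..t0} (\<lambda>u. R (\<phi>2 (u - t0)))"
    unfolding clock_def by (rule integral_cong) (simp add: initial_segment)
  also have "\<dots> = integral {-t0..0} (\<lambda>u. R (\<phi>2 u))"
    using integral_shift_Icc_real[of 0 t0 "\<lambda>u. R (\<phi>2 u)" "-t0"] by (simp add: o_def add.commute)
  finally show ?thesis
    using initial_R_integral by simp
qed

lemma clock_inv_clock: "x \<in> {0..T} \<Longrightarrow> clock_inv T (clock x) = x"
  unfolding clock_inv_def by (rule the_equality) (auto simp: clock_eq_iff)

lemma clock_image: "clock ` {0..T} = {0..clock T}"
proof
  show "clock ` {0..T} \<subseteq> {0..clock T}"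
  proof
    fix y assume "y \<in> clock ` {0..T}"
    then obtain x where "x \<in> {0..T}" "y = clock x"
      by auto
    then show "y \<in> {0..clock T}"
      using clock_le_iff[of 0 x] clock_le_iff[of x T] T_ge t0_pos clock_0 by auto
  qed
  show "{0..clock T} \<subseteq> clock ` {0..T}"
  proof
    fix y assume "y \<in> {0..clock T}"
    moreover have "0 \<le> T"
      using T_ge t0_pos by simp
    ultimately obtain x where "0 \<le> x" "x \<le> T" "clock x = y"
      using IVT'[of clock 0 y T] clock_continuous_on clock_0 by auto
    then show "y \<in> clock ` {0..T}"
      by force
  qed
qed

lemma clock_inv:
  assumes "y \<in> {0..clock T}"
  shows "clock_inv T y \<in> {0..T}" "clock (clock_inv T y) = y"
proof -
  obtain x where "x \<in> {0..T}" "y = clock x"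
    using assms clock_image by blast
  then show "clock_inv T y \<in> {0..T}" "clock (clock_inv T y) = y"
    using clock_inv_clock by auto
qed

lemma clock_inv_continuous_on: "continuous_on {0..clock T} (clock_inv T)"
  using continuous_on_inv[OF clock_continuous_on compact_Icc] clock_inv_clock clock_image by auto

lemma clock_minus_m_range:
  assumes "t \<in> {t0..T}"
  shows "clock t - m \<in> {0..clock T}"
proof -
  have "t \<in> {0..T}" "t0 \<in> {0..T}"
    using assms t0_pos by auto
  then show ?thesis
    using clock_le_iff[of t0 t] clock_le_iff[of t T] assms clock_t0 m_pos by auto
qed

lemma entry_time:
  assumes "t \<in> {t0..T}"
  shows "entry_time T t \<in> {0..t}" "clock (entry_time T t) = clock t - m"
proof -
  have "entry_time T t \<in> {0..T}" and clock_entry: "clock (entry_time T t) = clock t - m"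
    unfolding entry_time_def using clock_inv[OF clock_minus_m_range[OF assms]] by auto
  moreover have "entry_time T t \<le> t"
    using clock_le_iff[of "entry_time T t" t] assms calculation m_pos t0_pos by auto
  ultimately show "entry_time T t \<in> {0..t}" "clock (entry_time T t) = clock t - m"
    by auto
qed

lemma entry_time_t0: "entry_time T t0 = 0"
  unfolding entry_time_def using clock_t0 clock_0 clock_inv_clock[of 0] T_ge t0_pos by simp

lemma entry_time_bounds:
  assumes "t \<in> {t0<..T}"
  shows "0 < entry_time T t" "entry_time T t < t"
proof -
  have t: "t \<in> {t0..T}" "t \<in> {0..T}" "t0 \<in> {0..T}"
    using assms t0_pos by auto
  have "clock t0 < clock t"
    using clock_strict_mono[of t0 t] t assms by auto
  then show "0 < entry_time T t"
    using entry_time[OF t(1)] clock_t0 clock_0 by (cases "entry_time T t = 0") auto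
  show "entry_time T t < t"
    using entry_time[OF t(1)] m_pos by (cases "entry_time T t = t") auto
qed

lemma delay_eq_entry_time:
  assumes "t \<in> {t0..T}"
  shows "delay R P 0 t m = t - entry_time T t"
  unfolding delay_def
proof (rule the_equality)
  show "0 \<le> t - entry_time T t \<and> 0 \<le> t - (t - entry_time T t)
      \<and> integral {t - (t - entry_time T t)..t} (\<lambda>u. R (P u)) = m"
    using entry_time[OF assms] clock_diff[of "entry_time T t" t] assms by auto
next
  fix \<tau> assume \<tau>: "0 \<le> \<tau> \<and> 0 \<le> t - \<tau> \<and> integral {t - \<tau>..t} (\<lambda>u. R (P u)) = m"
  then have "clock (t - \<tau>) = clock (entry_time T t)"
    using clock_diff[of "t - \<tau>" t] entry_time[OF assms] assms by auto
  then show "\<tau> = t - entry_time T t"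
    using clock_eq_iff[of "t - \<tau>" "entry_time T t"] entry_time[OF assms] \<tau> assms by auto
qed

lemma entry_time_continuous_on: "continuous_on {t0..T} (entry_time T)"
proof -
  have "continuous_on {t0..T} (\<lambda>t. clock t - m)"
    using t0_pos by (intro continuous_intros continuous_on_subset[OF clock_continuous_on]) auto
  moreover have "(\<lambda>t. clock t - m) ` {t0..T} \<subseteq> {0..clock T}"
    using clock_minus_m_range by blast
  ultimately show ?thesis
    unfolding entry_time_def[abs_def] by (rule continuous_on_compose2[OF clock_inv_continuous_on])
qed

lemma entry_time_DERIV:
  assumes "t \<in> {t0<..<T}"
  shows "DERIV (entry_time T) t :> R (P t) / R (P (entry_time T t))"
proof -
  define y where "y = clock t - m"
  have a: "entry_time T t \<in> {0<..<T}"
    using entry_time_bounds[of t] assms by auto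
  have clock_a: "clock (entry_time T t) = y"
    using entry_time[of t] assms unfolding y_def by auto
  have y: "0 < y" "y < clock T"
    using clock_strict_mono[of 0 "entry_time T t"] clock_strict_mono[of "entry_time T t" T] a clock_0 clock_a
    by auto
  have "DERIV (clock_inv T) y :> inverse (R (P (entry_time T t)))"
  proof (rule DERIV_inverse_function[where f = clock and a = 0 and b = "clock T", OF _ _ y])
    show "DERIV clock (clock_inv T y) :> R (P (entry_time T t))"
      using clock_DERIV[of "entry_time T t"] a unfolding entry_time_def y_def by auto
    show "R (P (entry_time T t)) \<noteq> 0"
      using R_P_pos[of "entry_time T t"] a by auto
    show "clock (clock_inv T z) = z" if "0 < z" "z < clock T" for z
      using clock_inv[of z] that by auto
    show "isCont (clock_inv T) y"
      by (rule continuous_on_interior[OF clock_inv_continuous_on]) (use y in auto)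
  qed
  moreover have "DERIV (\<lambda>t. clock t - m) t :> R (P t)"
    using clock_DERIV[of t] assms t0_pos by (auto intro!: derivative_eq_intros)
  ultimately have "DERIV (\<lambda>t. clock_inv T (clock t - m)) t :> inverse (R (P (entry_time T t))) * R (P t)"
    unfolding y_def by (rule DERIV_chain2)
  then show ?thesis
    unfolding entry_time_def[abs_def] by (simp add: field_simps)
qed

lemma recruitment_continuous_on: "continuous_on {0..T} recruitment"
proof -
  have "continuous_on {0..T} (\<lambda>u. h (P u))"
  proof (rule continuous_on_compose2[OF C1_nonneg_continuous_on[OF h_C1]])
    show "continuous_on {0..T} P"
      by (rule NPZ_continuous_on) simp
  qed (use P_pos_upto in \<open>auto simp: less_imp_le\<close>)
  then show ?thesis
    unfolding recruitment_def by (intro continuous_intros NPZ_continuous_on) auto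
qed

lemma recruitment_nonneg:
  assumes "u \<in> {0..T}" "0 \<le> Z u"
  shows "0 \<le> recruitment u"
proof -
  have "0 \<le> h (P u)"
    using assms(1) P_pos_upto h_nonneg by (simp add: less_imp_le)
  then show ?thesis
    using assms(2) g_pos gamma_pos unfolding recruitment_def by simp
qed

lemma weighted_recruitment_DERIV_within:
  "x \<in> {0..T} \<Longrightarrow>
    (weighted_recruitment has_real_derivative exp (\<delta>0 * x) * recruitment x) (at x within {0..T})"
  unfolding weighted_recruitment_def
  by (rule integral_has_real_derivative) (intro continuous_intros recruitment_continuous_on)

lemma weighted_recruitment_DERIV:
  "x \<in> {0<..<T} \<Longrightarrow> DERIV weighted_recruitment x :> exp (\<delta>0 * x) * recruitment x"
  using weighted_recruitment_DERIV_within[of x] at_within_interior[of x "{0..T}"] by auto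

lemma weighted_recruitment_continuous_on: "continuous_on {0..T} weighted_recruitment"
  using weighted_recruitment_DERIV_within by (rule DERIV_continuous_on)

lemma juvenile_mass_entry_time:
  "t \<in> {t0..T} \<Longrightarrow>
    juvenile_mass t = integral {entry_time T t..t} (\<lambda>u. exp (- \<delta>0 * (t - u)) * recruitment u)"
  unfolding juvenile_mass_def using delay_eq_entry_time by simp

lemma juvenile_mass_weighted:
  assumes "t \<in> {t0..T}"
  shows "juvenile_mass t = exp (- \<delta>0 * t) * (weighted_recruitment t - weighted_recruitment (entry_time T t))"
proof -
  have a: "entry_time T t \<in> {0..t}"
    using entry_time assms by auto
  have "(\<lambda>u. exp (\<delta>0 * u) * recruitment u) integrable_on {0..t}"
    using assms by (intro integrable_continuous_real continuous_intros
        continuous_on_subset[OF recruitment_continuous_on]) auto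
  from Henstock_Kurzweil_Integration.integral_combine[OF _ _ this, of "entry_time T t"] a
  have "integral {entry_time T t..t} (\<lambda>u. exp (\<delta>0 * u) * recruitment u)
      = weighted_recruitment t - weighted_recruitment (entry_time T t)"
    unfolding weighted_recruitment_def by auto
  moreover have "juvenile_mass t
      = integral {entry_time T t..t} (\<lambda>u. exp (- \<delta>0 * t) * (exp (\<delta>0 * u) * recruitment u))"
    unfolding juvenile_mass_entry_time[OF assms]
    by (rule integral_cong) (simp add: algebra_simps flip: exp_add)
  ultimately show ?thesis
    by simp
qed

lemma juvenile_mass_nonneg:
  assumes "t \<in> {t0..T}" "\<forall>u\<in>{0..t}. 0 \<le> Z u"
  shows "0 \<le> juvenile_mass t"
proof -
  have a: "entry_time T t \<in> {0..t}"
    using entry_time assms by auto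
  have "0 \<le> integral {entry_time T t..t} (\<lambda>u. exp (- \<delta>0 * (t - u)) * recruitment u)"
  proof (rule integral_nonneg)
    show "(\<lambda>u. exp (- \<delta>0 * (t - u)) * recruitment u) integrable_on {entry_time T t..t}"
      using a assms by (intro integrable_continuous_real continuous_intros
          continuous_on_subset[OF recruitment_continuous_on]) auto
    show "0 \<le> exp (- \<delta>0 * (t - u)) * recruitment u" if "u \<in> {entry_time T t..t}" for u
      using recruitment_nonneg[of u] assms a that by auto
  qed
  then show ?thesis
    using juvenile_mass_entry_time[OF assms(1)] by simp
qed

lemma initial_R_integral_from:
  assumes "c \<in> {0..t0}"
  shows "integral {c - t0..0} (\<lambda>u. R (\<phi>2 u)) = m - clock c"
proof -
  have "integral {c..t0} ((\<lambda>u. R (\<phi>2 u)) \<circ> (+) (-t0)) = integral {c + -t0..t0 + -t0} (\<lambda>u. R (\<phi>2 u))"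
    by (rule integral_shift_Icc_real)
  then have "integral {c - t0..0} (\<lambda>u. R (\<phi>2 u)) = integral {c..t0} (\<lambda>u. R (\<phi>2 (u - t0)))"
    by (simp add: o_def)
  also have "\<dots> = integral {c..t0} (\<lambda>u. R (P u))"
    by (rule integral_cong) (use assms initial_segment in auto)
  also have "\<dots> = m - clock c"
    using clock_diff[of c t0] clock_t0 assms T_ge by auto
  finally show ?thesis .
qed

lemma clock_inv_initial:
  assumes "y \<in> {0..m}"
  shows "clock_inv T y \<in> {0..t0}" "clock (clock_inv T y) = y"
proof -
  have "y \<in> {0..clock T}"
    using assms clock_minus_m_range[of T] T_ge by auto
  then have x: "clock_inv T y \<in> {0..T}" "clock (clock_inv T y) = y"
    by (rule clock_inv)+
  moreover have "clock_inv T y \<le> t0"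
    using clock_le_iff[of "clock_inv T y" t0] x clock_t0 assms T_ge t0_pos by auto
  ultimately show "clock_inv T y \<in> {0..t0}" "clock (clock_inv T y) = y"
    by auto
qed

lemma initial_delay:
  assumes "s \<in> {0..m}"
  shows "delay R \<phi>2 (-t0) 0 s = t0 - clock_inv T (m - s)"
  unfolding delay_def
proof (rule the_equality)
  have "clock_inv T (m - s) \<in> {0..t0}" "clock (clock_inv T (m - s)) = m - s"
    using clock_inv_initial assms by auto
  then show "0 \<le> t0 - clock_inv T (m - s) \<and> - t0 \<le> 0 - (t0 - clock_inv T (m - s))
      \<and> integral {0 - (t0 - clock_inv T (m - s))..0} (\<lambda>u. R (\<phi>2 u)) = s"
    using initial_R_integral_from[of "clock_inv T (m - s)"] by auto
next
  fix \<tau> assume \<tau>: "0 \<le> \<tau> \<and> - t0 \<le> 0 - \<tau> \<and> integral {0 - \<tau>..0} (\<lambda>u. R (\<phi>2 u)) = s"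
  then have "clock (t0 - \<tau>) = clock (clock_inv T (m - s))"
    using initial_R_integral_from[of "t0 - \<tau>"] clock_inv_initial[of "m - s"] assms by auto
  then show "\<tau> = t0 - clock_inv T (m - s)"
    using clock_eq_iff[of "t0 - \<tau>" "clock_inv T (m - s)"] clock_inv_initial[of "m - s"] \<tau> assms T_ge
    by auto
qed

lemma clock_image_initial: "clock ` {0..t0} \<subseteq> {0..m}"
proof
  fix y assume "y \<in> clock ` {0..t0}"
  then obtain x where "x \<in> {0..t0}" "y = clock x"
    by auto
  then show "y \<in> {0..m}"
    using clock_le_iff[of 0 x] clock_le_iff[of x t0] clock_0 clock_t0 T_ge t0_pos by auto
qed

text \<open>The substitution y = clock u turns the juvenile mass at t0 into the integral over
  maturation levels in the definition of D_NT.\<close>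
lemma initial_juvenile_substitution:
  "integral {0..t0} (\<lambda>u. exp (- \<delta>0 * (t0 - u)) * recruitment u) =
   integral {0..m} (\<lambda>s. let x = clock_inv T (m - s) in
     exp (- \<delta>0 * (t0 - x)) * recruitment x / R (P x))"
proof -
  define \<psi> where "\<psi> x = exp (- \<delta>0 * (t0 - x)) * recruitment x / R (P x)" for x
  have sub: "{0..t0} \<subseteq> {0..T}"
    using T_ge by auto
  have "continuous_on {0..t0} \<psi>"
    unfolding \<psi>_def using R_P_pos sub
    by (intro continuous_intros continuous_on_subset[OF recruitment_continuous_on sub]
        continuous_on_subset[OF R_P_continuous_on sub]) (auto simp: less_imp_neq[symmetric])
  moreover have "continuous_on {0..m} (clock_inv T)"
    using clock_minus_m_range[of T] T_ge
    by (intro continuous_on_subset[OF clock_inv_continuous_on]) auto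
  ultimately have cont: "continuous_on {0..m} (\<lambda>y. \<psi> (clock_inv T y))"
    by (rule continuous_on_compose2) (use clock_inv_initial in auto)
  have "((\<lambda>x. R (P x) *\<^sub>R \<psi> (clock_inv T (clock x))) has_integral
      integral {clock 0..clock t0} (\<lambda>y. \<psi> (clock_inv T y))) {0..t0}"
  proof (rule has_integral_substitution[OF _ _ clock_image_initial cont])
    show "(clock has_real_derivative R (P x)) (at x within {0..t0})" if "x \<in> {0..t0}" for x
      using that sub by (intro DERIV_subset[OF clock_DERIV_within]) auto
  qed (use clock_0 clock_t0 t0_pos m_pos in auto)
  moreover have "R (P x) *\<^sub>R \<psi> (clock_inv T (clock x)) = exp (- \<delta>0 * (t0 - x)) * recruitment x"
    if "x \<in> {0..t0}" for x
    using that sub clock_inv_clock[of x] R_P_pos[of x] unfolding \<psi>_def by auto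
  ultimately have "((\<lambda>u. exp (- \<delta>0 * (t0 - u)) * recruitment u) has_integral
      integral {0..m} (\<lambda>y. \<psi> (clock_inv T y))) {0..t0}"
    unfolding clock_0 clock_t0 by (subst (asm) has_integral_cong) auto
  then have "integral {0..t0} (\<lambda>u. exp (- \<delta>0 * (t0 - u)) * recruitment u)
      = integral {0..m} (\<lambda>y. \<psi> (clock_inv T y))"
    by (rule integral_unique)
  also have "\<dots> = integral {0..m} (\<lambda>s. \<psi> (clock_inv T (m - s)))"
    by (rule integral_reflect_Icc[symmetric])
  finally show ?thesis
    unfolding \<psi>_def Let_def .
qed

lemma juvenile_mass_t0: "N t0 + P t0 + Z t0 + juvenile_mass t0 = NT"
proof -
  have "juvenile_mass t0 = integral {0..t0} (\<lambda>u. exp (- \<delta>0 * (t0 - u)) * recruitment u)"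
    using juvenile_mass_entry_time[of t0] entry_time_t0 T_ge by simp
  also have "\<dots> = integral {0..m} (\<lambda>s. let \<tau> = delay R \<phi>2 (-t0) 0 s in
          exp (-\<delta>0 * \<tau>) * \<gamma> * g * \<phi>3 (-\<tau>) * h (\<phi>2 (-\<tau>)) / R (\<phi>2 (-\<tau>)))"
    unfolding initial_juvenile_substitution
  proof (rule integral_cong)
    fix s assume s: "s \<in> {0..m}"
    then have x: "clock_inv T (m - s) \<in> {0..t0}"
      using clock_inv_initial by auto
    then show "(let x = clock_inv T (m - s) in exp (- \<delta>0 * (t0 - x)) * recruitment x / R (P x)) =
        (let \<tau> = delay R \<phi>2 (-t0) 0 s in
          exp (-\<delta>0 * \<tau>) * \<gamma> * g * \<phi>3 (-\<tau>) * h (\<phi>2 (-\<tau>)) / R (\<phi>2 (-\<tau>)))"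
      unfolding initial_delay[OF s] Let_def recruitment_def initial_segment[OF x]
      by (simp add: mult.assoc)
  qed
  finally show ?thesis
    using NT_initial initial_segment[of t0] t0_pos by simp
qed

subsection \<open>Conservation of total mass\<close>

lemma Z_DERIV_entry_time:
  assumes "t \<in> {t0<..<T}"
  shows "DERIV Z t :> R (P t) * (exp (\<delta>0 * entry_time T t) / exp (\<delta>0 * t))
      * recruitment (entry_time T t) / R (P (entry_time T t)) - \<delta> * Z t"
proof -
  have "exp (- \<delta>0 * (t - entry_time T t)) = exp (\<delta>0 * entry_time T t) / exp (\<delta>0 * t)"
    by (simp add: algebra_simps flip: exp_diff)
  then show ?thesis
    using Z_DERIV[of t] delay_eq_entry_time[of t] assms
    unfolding Let_def recruitment_def by (simp add: mult.assoc)
qed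

lemma mass_excess_DERIV:
  assumes t: "t \<in> {t0<..<T}"
  shows "DERIV (mass_excess T) t :> 0"
proof -
  define a where "a = entry_time T t"
  have a: "a \<in> {0<..<T}"
    using entry_time_bounds[of t] t unfolding a_def by auto
  have dWa: "DERIV (\<lambda>s. weighted_recruitment (entry_time T s)) t :>
      exp (\<delta>0 * a) * recruitment a * (R (P t) / R (P a))"
    using DERIV_chain2[OF weighted_recruitment_DERIV entry_time_DERIV[OF t]] a unfolding a_def by simp
  have dW: "DERIV weighted_recruitment t :> exp (\<delta>0 * t) * recruitment t"
    using weighted_recruitment_DERIV[of t] t t0_pos by auto
  have dS: "DERIV (\<lambda>s. N s + P s + Z s - NT) t :>
      (- \<mu> * P t * f (N t) + lam * P t + \<delta> * Z t + (1 - \<gamma>) * g * Z t * h (P t)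
        + \<delta>0 * (NT - N t - P t - Z t))
      + (\<mu> * P t * f (N t) - lam * P t - g * Z t * h (P t))
      + (R (P t) * (exp (\<delta>0 * a) / exp (\<delta>0 * t)) * recruitment a / R (P a) - \<delta> * Z t) - 0"
    using t unfolding a_def
    by (intro DERIV_diff DERIV_add N_DERIV P_DERIV Z_DERIV_entry_time DERIV_const) auto
  have dE: "DERIV (\<lambda>s. exp (\<delta>0 * s)) t :> exp (\<delta>0 * t) * \<delta>0"
    by (auto intro!: derivative_eq_intros)
  have "DERIV (mass_excess T) t :>
      exp (\<delta>0 * t) * \<delta>0 * (N t + P t + Z t - NT)
      + ((- \<mu> * P t * f (N t) + lam * P t + \<delta> * Z t + (1 - \<gamma>) * g * Z t * h (P t)
          + \<delta>0 * (NT - N t - P t - Z t))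
        + (\<mu> * P t * f (N t) - lam * P t - g * Z t * h (P t))
        + (R (P t) * (exp (\<delta>0 * a) / exp (\<delta>0 * t)) * recruitment a / R (P a) - \<delta> * Z t) - 0) * exp (\<delta>0 * t)
      + (exp (\<delta>0 * t) * recruitment t - exp (\<delta>0 * a) * recruitment a * (R (P t) / R (P a)))"
    (is "DERIV _ _ :> ?d")
    unfolding mass_excess_def[abs_def] by (intro DERIV_add DERIV_mult dE dS DERIV_diff dW dWa)
  moreover have "?d = 0"
    using R_P_pos[of a] a unfolding recruitment_def by (simp add: field_simps)
  ultimately show ?thesis
    by simp
qed

lemma mass_excess_continuous_on: "continuous_on {t0..T} (mass_excess T)"
proof -
  have "entry_time T ` {t0..T} \<subseteq> {0..T}"
  proof
    fix y assume "y \<in> entry_time T ` {t0..T}"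
    then obtain t where "t \<in> {t0..T}" "y = entry_time T t"
      by auto
    then show "y \<in> {0..T}"
      using entry_time(1)[of t] by auto
  qed
  then have "continuous_on {t0..T} (\<lambda>t. weighted_recruitment (entry_time T t))"
    by (intro continuous_on_compose2[OF weighted_recruitment_continuous_on entry_time_continuous_on])
  then show ?thesis
    unfolding mass_excess_def[abs_def] using t0_pos
    by (intro continuous_intros NPZ_continuous_on
        continuous_on_subset[OF weighted_recruitment_continuous_on]) auto
qed

lemma mass_excess_eq:
  assumes "t \<in> {t0..T}"
  shows "mass_excess T t = exp (\<delta>0 * t) * (N t + P t + Z t + juvenile_mass t - NT)"
proof -
  have "exp (\<delta>0 * t) * juvenile_mass t = weighted_recruitment t - weighted_recruitment (entry_time T t)"
    by (simp add: juvenile_mass_weighted[OF assms] exp_minus field_simps)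
  then show ?thesis
    unfolding mass_excess_def by (simp add: algebra_simps)
qed

lemma total_mass_conservation:
  assumes "t \<in> {t0..T}"
  shows "N t + P t + Z t + juvenile_mass t = NT"
proof -
  have "mass_excess T t = mass_excess T t0"
  proof (cases "t = t0")
    case False
    then have "t0 < T"
      using assms by auto
    then show ?thesis
      by (rule DERIV_isconst2[OF _ mass_excess_continuous_on]) (use mass_excess_DERIV assms in auto)
  qed simp
  also have "mass_excess T t0 = 0"
    using mass_excess_eq[of t0] juvenile_mass_t0 T_ge by simp
  finally show ?thesis
    using mass_excess_eq[OF assms] by simp
qed

lemma mass_bound:
  assumes "t \<in> {t0..T}" "\<forall>u\<in>{0..t}. 0 \<le> Z u"
  shows "N t + P t + Z t \<le> NT"
  using total_mass_conservation[OF assms(1)] juvenile_mass_nonneg[OF assms] by simp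

end

subsection \<open>Positivity\<close>

lemma Z_lower_bound:
  assumes "t0 \<le> s" "\<forall>u\<in>{0..<s}. 0 < N u \<and> 0 < P u \<and> 0 < Z u"
  shows "Z t0 * exp (- \<delta> * (s - t0)) \<le> Z s"
proof (rule exp_lower_bound_DERIV[OF assms(1) NPZ_continuous_on(3)])
  fix x assume x: "t0 < x" "x < s"
  define T where "T = (x + s) / 2"
  have T: "t0 \<le> T" "\<forall>u\<in>{0..T}. 0 < P u" "x \<in> {t0<..<T}"
    using assms x unfolding T_def by auto
  define a where "a = entry_time T x"
  have "a \<in> {0..x}"
    using entry_time(1)[OF T(1,2), of x] T(3) unfolding a_def by auto
  then have "0 < P a" "0 < Z a" "0 < P x"
    using assms x t0_pos by auto
  then have "0 \<le> R (P x) * (exp (\<delta>0 * a) / exp (\<delta>0 * x)) * recruitment a / R (P a)"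
    using recruitment_nonneg[OF T(1,2), of a] R_pos \<open>a \<in> {0..x}\<close> T(3) by (auto simp: less_imp_le)
  then show "\<exists>d. DERIV Z x :> d \<and> - \<delta> * Z x \<le> d"
    using Z_DERIV_entry_time[OF T] unfolding a_def by auto
qed (use t0_pos in simp)

lemma P_lower_bound:
  assumes "t0 \<le> s" "\<forall>u\<in>{0..<s}. 0 < N u \<and> 0 < P u \<and> 0 < Z u"
  obtains K where "P t0 * exp (- K * (s - t0)) \<le> P s"
proof -
  have "0 \<le> t0"
    using t0_pos by simp
  obtain BZ where BZ: "0 < BZ" "\<And>x. x \<in> {t0..s} \<Longrightarrow> \<bar>Z x\<bar> \<le> BZ"
    using continuous_on_Icc_abs_bound[OF NPZ_continuous_on(3)[OF \<open>0 \<le> t0\<close>]] by metis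
  obtain BP where BP: "\<And>x. x \<in> {t0..s} \<Longrightarrow> \<bar>P x\<bar> \<le> BP"
    using continuous_on_Icc_abs_bound[OF NPZ_continuous_on(2)[OF \<open>0 \<le> t0\<close>]] by metis
  obtain C where C: "\<And>x. x \<in> {0..BP} \<Longrightarrow> h x \<le> C * x"
    using C1_nonneg_le_linear[OF h_C1 h_0] by metis
  have "P t0 * exp (- (lam + g * BZ * C) * (s - t0)) \<le> P s"
  proof (rule exp_lower_bound_DERIV[OF assms(1) NPZ_continuous_on(2)[OF \<open>0 \<le> t0\<close>]])
    fix x assume x: "t0 < x" "x < s"
    then have pos: "0 < N x" "0 < P x" "0 < Z x" "x \<in> {t0..s}"
      using assms t0_pos by auto
    have "Z x \<le> BZ" "P x \<le> BP"
      using BZ(2)[OF pos(4)] BP[OF pos(4)] by auto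
    then have "Z x * h (P x) \<le> BZ * (C * P x)"
      using BZ pos C[of "P x"] h_nonneg by (intro mult_mono) auto
    then have "g * Z x * h (P x) \<le> g * BZ * C * P x"
      using g_pos by (simp add: mult.assoc)
    moreover have "0 \<le> \<mu> * P x * f (N x)"
      using mu_gt_lam lam_pos pos f_nonneg by simp
    ultimately have "- (lam + g * BZ * C) * P x \<le> \<mu> * P x * f (N x) - lam * P x - g * Z x * h (P x)"
      by (simp add: algebra_simps)
    then show "\<exists>d. DERIV P x :> d \<and> - (lam + g * BZ * C) * P x \<le> d"
      using P_DERIV[OF x(1)] by blast
  qed
  then show thesis
    by (rule that)
qed

lemma N_lower_bound:
  assumes "t0 \<le> s" "\<forall>u\<in>{0..<s}. 0 < N u \<and> 0 < P u \<and> 0 < Z u"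
  obtains K where "N t0 * exp (- K * (s - t0)) \<le> N s"
proof -
  have "0 \<le> t0"
    using t0_pos by simp
  obtain BN where BN: "\<And>x. x \<in> {t0..s} \<Longrightarrow> \<bar>N x\<bar> \<le> BN"
    using continuous_on_Icc_abs_bound[OF NPZ_continuous_on(1)[OF \<open>0 \<le> t0\<close>]] by metis
  obtain BP where BP: "0 < BP" "\<And>x. x \<in> {t0..s} \<Longrightarrow> \<bar>P x\<bar> \<le> BP"
    using continuous_on_Icc_abs_bound[OF NPZ_continuous_on(2)[OF \<open>0 \<le> t0\<close>]] by metis
  obtain C where C: "\<And>x. x \<in> {0..BN} \<Longrightarrow> f x \<le> C * x"
    using C1_nonneg_le_linear[OF f_C1 f_0] by metis
  have "N t0 * exp (- (\<mu> * BP * C) * (s - t0)) \<le> N s"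
  proof (rule exp_lower_bound_DERIV[OF assms(1) NPZ_continuous_on(1)[OF \<open>0 \<le> t0\<close>]])
    fix x assume x: "t0 < x" "x < s"
    then have pos: "0 < N x" "0 < P x" "0 < Z x" "x \<in> {t0..s}"
      using assms t0_pos by auto
    have "P x \<le> BP" "N x \<le> BN"
      using BP(2)[OF pos(4)] BN[OF pos(4)] by auto
    then have "P x * f (N x) \<le> BP * (C * N x)"
      using BP pos C[of "N x"] f_nonneg by (intro mult_mono) auto
    then have "\<mu> * P x * f (N x) \<le> \<mu> * BP * C * N x"
      using mu_gt_lam lam_pos by (simp add: mult.assoc)
    moreover have "N x + P x + Z x \<le> NT"
      by (rule mass_bound[of "(x + s) / 2" x]) (use assms x in \<open>auto simp: less_imp_le\<close>)
    then have "0 \<le> lam * P x + \<delta> * Z x + (1 - \<gamma>) * g * Z x * h (P x) + \<delta>0 * (NT - N x - P x - Z x)"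
      using lam_pos delta_pos delta0_nonneg gamma_le_1 g_pos pos h_nonneg by simp
    ultimately have "- (\<mu> * BP * C * N x) \<le> - (\<mu> * P x * f (N x)) + lam * P x + \<delta> * Z x
        + (1 - \<gamma>) * g * Z x * h (P x) + \<delta>0 * (NT - N x - P x - Z x)"
      by linarith
    then have "- (\<mu> * BP * C) * N x \<le> - \<mu> * P x * f (N x) + lam * P x + \<delta> * Z x
        + (1 - \<gamma>) * g * Z x * h (P x) + \<delta>0 * (NT - N x - P x - Z x)"
      by simp
    then show "\<exists>d. DERIV N x :> d \<and> - (\<mu> * BP * C) * N x \<le> d"
      using N_DERIV[OF x(1)] by blast
  qed
  then show thesis
    by (rule that)
qed

lemma positive_extends_to_endpoint:
  assumes "t0 \<le> s" "\<forall>u\<in>{0..<s}. 0 < N u \<and> 0 < P u \<and> 0 < Z u"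
  shows "0 < N s" "0 < P s" "0 < Z s"
proof -
  have "0 < N t0" "0 < P t0" "0 < Z t0"
    using initial_segment_pos[of t0] t0_pos by auto
  obtain KN where "N t0 * exp (- KN * (s - t0)) \<le> N s"
    by (rule N_lower_bound[OF \<open>t0 \<le> s\<close> assms(2)])
  moreover have "0 < N t0 * exp (- KN * (s - t0))"
    using \<open>0 < N t0\<close> by simp
  moreover obtain KP where "P t0 * exp (- KP * (s - t0)) \<le> P s"
    by (rule P_lower_bound[OF \<open>t0 \<le> s\<close> assms(2)])
  moreover have "0 < P t0 * exp (- KP * (s - t0))"
    using \<open>0 < P t0\<close> by simp
  moreover have "Z t0 * exp (- \<delta> * (s - t0)) \<le> Z s"
    by (rule Z_lower_bound[OF \<open>t0 \<le> s\<close> assms(2)])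
  moreover have "0 < Z t0 * exp (- \<delta> * (s - t0))"
    using \<open>0 < Z t0\<close> by simp
  ultimately show "0 < N s" "0 < P s" "0 < Z s"
    by linarith+
qed

lemma solution_pos:
  assumes "0 \<le> t"
  shows "0 < N t \<and> 0 < P t \<and> 0 < Z t"
proof (rule ccontr)
  assume nonpos: "\<not> (0 < N t \<and> 0 < P t \<and> 0 < Z t)"
  have "t0 < t"
  proof (rule ccontr)
    assume "\<not> t0 < t"
    then have "t \<in> {0..t0}"
      using assms by auto
    then show False
      using nonpos initial_segment_pos[of t] by auto
  qed
  let ?S = "{x \<in> {t0..t}. N x \<le> 0} \<union> {x \<in> {t0..t}. P x \<le> 0} \<union> {x \<in> {t0..t}. Z x \<le> 0}"
  have "closed ?S"
    using t0_pos by (intro closed_Un continuous_on_closed_Collect_le continuous_on_const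
        NPZ_continuous_on closed_atLeastAtMost) auto
  then obtain s where s: "s \<in> ?S" and before: "\<And>x. x < s \<Longrightarrow> x \<notin> ?S"
    by (rule closed_first_point[where a = t0 and t = t]) (use nonpos \<open>t0 < t\<close> in auto)
  have "t0 \<notin> ?S"
    using initial_segment_pos[of t0] t0_pos by auto
  then have "t0 \<le> s"
    using s by auto
  have pos_before: "\<forall>u\<in>{0..<s}. 0 < N u \<and> 0 < P u \<and> 0 < Z u"
  proof
    fix u assume u: "u \<in> {0..<s}"
    show "0 < N u \<and> 0 < P u \<and> 0 < Z u"
    proof (cases "u \<le> t0")
      case True
      then show ?thesis
        using initial_segment_pos[of u] u by auto
    next
      case False
      then show ?thesis
        using before[of u] u s by auto
    qed
  qed
  then show False
    using positive_extends_to_endpoint[OF \<open>t0 \<le> s\<close> pos_before] s by auto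
qed

lemma N_plus_P_less_NT:
  assumes "t0 \<le> t"
  shows "N t + P t < NT"
proof -
  have "0 < P u" "0 \<le> Z u" if "u \<in> {0..t}" for u
    using solution_pos[of u] that by auto
  then have "N t + P t + Z t \<le> NT"
    using mass_bound[of t t] assms by auto
  then show ?thesis
    using solution_pos[of t] assms t0_pos by auto
qed

subsection \<open>Decay of P above the threshold\<close>

lemma P_decay_above_level:
  assumes "(THE x. 0 \<le> x \<and> f x = lam / \<mu>) < NT" "NT - (THE x. 0 \<le> x \<and> f x = lam / \<mu>) < \<beta>"
    "\<beta> < NT"
  obtains c where "0 < c"
    "\<And>t. t0 \<le> t \<Longrightarrow> \<beta> \<le> P t \<Longrightarrow> \<mu> * P t * f (N t) - lam * P t - g * Z t * h (P t) \<le> - c"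
proof
  let ?N1 = "THE x. 0 \<le> x \<and> f x = lam / \<mu>"
  have "0 < \<mu>"
    using mu_gt_lam lam_pos by simp
  then have N1: "0 \<le> ?N1" "f ?N1 = lam / \<mu>"
    using C1_nonneg_the_preimage[OF f_C1 f'_pos f_0 f_tendsto, of "lam / \<mu>"] mu_gt_lam lam_pos by auto
  have "f (NT - \<beta>) < lam / \<mu>"
    using C1_nonneg_strict_mono[OF f_C1 f'_pos, of "NT - \<beta>" ?N1] assms N1 by simp
  then have gap: "\<mu> * f (NT - \<beta>) < lam"
    using \<open>0 < \<mu>\<close> by (simp add: field_simps)
  have "0 < \<beta>"
    using assms by linarith
  then show "0 < (lam - \<mu> * f (NT - \<beta>)) * \<beta>"
    using gap by simp
  fix t assume t: "t0 \<le> t" "\<beta> \<le> P t"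
  have pos: "0 < N t" "0 < P t" "0 < Z t"
    using solution_pos[of t] t t0_pos by auto
  have "N t \<le> NT - \<beta>"
    using N_plus_P_less_NT[OF t(1)] t(2) by simp
  moreover have "\<forall>x\<ge>0. 0 \<le> f' x"
    using f'_pos by (simp add: less_imp_le)
  ultimately have "f (N t) \<le> f (NT - \<beta>)"
    using C1_nonneg_mono[OF f_C1, of "N t" "NT - \<beta>"] pos by simp
  then have "P t * f (N t) \<le> P t * f (NT - \<beta>)"
    by (rule mult_left_mono[OF _ less_imp_le[OF pos(2)]])
  then have "\<mu> * (P t * f (N t)) \<le> \<mu> * (P t * f (NT - \<beta>))"
    by (rule mult_left_mono[OF _ less_imp_le[OF \<open>0 < \<mu>\<close>]])
  then have "\<mu> * P t * f (N t) \<le> \<mu> * f (NT - \<beta>) * P t"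
    by (simp only: ac_simps)
  moreover have "0 \<le> g * Z t * h (P t)"
    using g_pos pos h_nonneg by simp
  moreover have "(lam - \<mu> * f (NT - \<beta>)) * \<beta> \<le> (lam - \<mu> * f (NT - \<beta>)) * P t"
    using gap t(2) by simp
  ultimately show "\<mu> * P t * f (N t) - lam * P t - g * Z t * h (P t) \<le> - ((lam - \<mu> * f (NT - \<beta>)) * \<beta>)"
    by (simp add: algebra_simps)
qed

lemma P_reaches_below_level:
  assumes "(THE x. 0 \<le> x \<and> f x = lam / \<mu>) < NT" "NT - (THE x. 0 \<le> x \<and> f x = lam / \<mu>) < \<beta>"
    "\<beta> < NT"
  shows "\<exists>t1\<ge>t0. P t1 < \<beta>"
proof (rule ccontr)
  obtain c where c: "0 < c"
    and decay: "\<And>t. t0 \<le> t \<Longrightarrow> \<beta> \<le> P t \<Longrightarrow> \<mu> * P t * f (N t) - lam * P t - g * Z t * h (P t) \<le> - c"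
    using P_decay_above_level[OF assms] by blast
  assume "\<not> (\<exists>t1\<ge>t0. P t1 < \<beta>)"
  then have above: "\<And>t. t0 \<le> t \<Longrightarrow> \<beta> \<le> P t"
    by auto
  define L where "L = t0 + P t0 / c + 1"
  have "t0 \<le> L"
    using solution_pos[of t0] t0_pos c unfolding L_def by simp
  then have "P L \<le> P t0 - c * (L - t0)"
  proof (rule DERIV_le_imp_linear_decrease)
    show "continuous_on {t0..L} P"
      using t0_pos by (intro NPZ_continuous_on) simp
    show "\<exists>d. DERIV P t :> d \<and> d \<le> - c" if "t0 < t" "t < L" for t
    proof -
      have "\<mu> * P t * f (N t) - lam * P t - g * Z t * h (P t) \<le> - c"
        using decay[of t] above[of t] that by simp
      then show ?thesis
        using P_DERIV[of t] that by blast
    qed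
  qed
  also have "\<dots> = - c"
  proof -
    have "c * (L - t0) = P t0 + c"
      using c unfolding L_def by (simp add: distrib_left)
    then show ?thesis
      by simp
  qed
  finally show False
    using solution_pos[of L] \<open>t0 \<le> L\<close> t0_pos c by simp
qed

lemma P_eventually_below:
  assumes "(THE x. 0 \<le> x \<and> f x = lam / \<mu>) < NT" "NT - (THE x. 0 \<le> x \<and> f x = lam / \<mu>) < \<beta>"
  shows "\<exists>t1\<ge>t0. \<forall>t\<ge>t1. P t < \<beta>"
proof (cases "NT \<le> \<beta>")
  case True
  then show ?thesis
    using N_plus_P_less_NT solution_pos t0_pos by (smt (verit))
next
  case False
  then have "\<beta> < NT"
    by simp
  then obtain c where c: "0 < c"
    and decay: "\<And>t. t0 \<le> t \<Longrightarrow> \<beta> \<le> P t \<Longrightarrow> \<mu> * P t * f (N t) - lam * P t - g * Z t * h (P t) \<le> - c"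
    using P_decay_above_level[OF assms] by blast
  obtain t1 where t1: "t0 \<le> t1" "P t1 < \<beta>"
    using P_reaches_below_level[OF assms \<open>\<beta> < NT\<close>] by blast
  have "P t < \<beta>" if "t1 \<le> t" for t
  proof (rule stays_below_level[of t1 t P \<beta>])
    show "t1 \<le> t" "P t1 < \<beta>"
      using that t1 by auto
    show "continuous_on {t1..t} P"
      using t1 t0_pos by (intro NPZ_continuous_on) simp
    show "\<exists>d<0. DERIV P s :> d" if "t1 < s" "s \<le> t" "\<beta> \<le> P s" for s
    proof -
      have "t0 < s"
        using that t1 by simp
      moreover have "\<mu> * P s * f (N s) - lam * P s - g * Z s * h (P s) \<le> - c"
        using decay[of s] that \<open>t0 < s\<close> by simp
      ultimately show ?thesis
        using P_DERIV[of s] c by (intro exI[of _ "\<mu> * P s * f (N s) - lam * P s - g * Z s * h (P s)"]) auto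
    qed
  qed
  with t1 show ?thesis
    by blast
qed

end

theorem lemma2:
  fixes \<mu> lam g \<gamma> \<delta> \<delta>0 m NT t0 :: real
    and f f' h h' R R' \<phi>1 \<phi>2 \<phi>3 N P Z :: "real \<Rightarrow> real"
  assumes "\<mu> > lam" "lam > 0" "g > 0" "0 < \<gamma>" "\<gamma> \<le> 1" "\<delta> > 0" "\<gamma> * g > \<delta>"
    "\<delta>0 \<ge> 0" "m > 0" "NT > 0"
    and "C1_nonneg f f'" "\<forall>x\<ge>0. f x \<ge> 0" "f 0 = 0" "\<forall>x\<ge>0. f' x > 0"
        "(f \<longlongrightarrow> 1) at_top"
    and "C1_nonneg h h'" "\<forall>x\<ge>0. h x \<ge> 0" "h 0 = 0" "\<forall>x\<ge>0. h' x > 0"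
        "(h \<longlongrightarrow> 1) at_top"
    and "C1_nonneg R R'" "\<forall>x\<ge>0. R x \<ge> 0" "\<forall>x\<ge>0. R' x \<ge> 0"
        "R 0 = 0 \<longrightarrow> R' 0 > 0" "\<exists>Rinf. (R \<longlongrightarrow> Rinf) at_top"
    and "D_NT R h \<gamma> g \<delta>0 m NT t0 \<phi>1 \<phi>2 \<phi>3"
    and "TDE_solution \<mu> lam g \<gamma> \<delta> \<delta>0 m NT t0 f h R \<phi>1 \<phi>2 \<phi>3 N P Z"
    and "NT > (THE x. x \<ge> 0 \<and> f x = lam / \<mu>)"
  shows "\<forall>\<beta>. \<beta> > NT - (THE x. x \<ge> 0 \<and> f x = lam / \<mu>) \<longrightarrow>
           (\<exists>t1\<ge>t0. \<forall>t\<ge>t1. P t < \<beta>)"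
proof -
  interpret tde_model \<mu> lam g \<gamma> \<delta> \<delta>0 m NT t0 f f' h h' R R' \<phi>1 \<phi>2 \<phi>3 N P Z
    by unfold_locales (rule assms)+
  show ?thesis
    using P_eventually_below assms(28) by blast
qed

end
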